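(* Let $\mu\ge1$. The prefix-average comparator for $\ge$ over $\{0,\dots,\mu\}$, i.e. the language of pairs $(A,B)$ of sequences in $\{0,\dots,\mu\}^\omega$ (read synchronously as words over $\{0,\dots,\mu\}^2$) with $\mathrm{PLA}(A)\ge\mathrm{PLA}(B)$, is not $\omega$-regular.
   Context: $\mathrm{Sum}(M[0,n-1])=\sum_{j=0}^{n-1}M[j]$. Prefix-average comparison: $\mathrm{PLA}(A)\ge\mathrm{PLA}(B)$ holds iff there are only finitely many indices $i$ with $\mathrm{Sum}(B[0,i-1])\ge\mathrm{Sum}(A[0,i-1])$ and infinitely many indices $i$ with $\mathrm{Sum}(A[0,i-1])>\mathrm{Sum}(B[0,i-1])$. *)

theory Defs
  imports Main
begin

definition prefix_sum :: "(nat \<Rightarrow> nat) \<Rightarrow> nat \<Rightarrow> nat" where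
  "prefix_sum M n = (\<Sum>j<n. M j)"

definition PLA_ge :: "(nat \<Rightarrow> nat) \<Rightarrow> (nat \<Rightarrow> nat) \<Rightarrow> bool" where
  "PLA_ge A B \<longleftrightarrow>
     finite {i. prefix_sum B i \<ge> prefix_sum A i} \<and>
     infinite {i. prefix_sum A i > prefix_sum B i}"

definition alph :: "nat \<Rightarrow> (nat \<times> nat) set" where
  "alph mu = {0..mu} \<times> {0..mu}"

definition PLA_comparator :: "nat \<Rightarrow> (nat \<Rightarrow> nat \<times> nat) set" where
  "PLA_comparator mu =
     {w. (\<forall>i. w i \<in> alph mu) \<and> PLA_ge (fst \<circ> w) (snd \<circ> w)}"

definition buchi_accepts ::
  "nat set \<Rightarrow> nat set \<Rightarrow> (nat \<times> 'a \<times> nat) set \<Rightarrow> nat set \<Rightarrow> (nat \<Rightarrow> 'a) \<Rightarrow> bool" where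
  "buchi_accepts Q I delta F w \<longleftrightarrow>
     (\<exists>r. r 0 \<in> I \<and> (\<forall>i. r i \<in> Q \<and> (r i, w i, r (Suc i)) \<in> delta) \<and>
          (\<exists>\<^sub>\<infinity>i. r i \<in> F))"

definition omega_regular :: "'a set \<Rightarrow> (nat \<Rightarrow> 'a) set \<Rightarrow> bool" where
  "omega_regular S L \<longleftrightarrow>
     L \<subseteq> {w. \<forall>i. w i \<in> S} \<and>
     (\<exists>Q I delta F. finite Q \<and> I \<subseteq> Q \<and> F \<subseteq> Q \<and> delta \<subseteq> Q \<times> S \<times> Q \<and>
        (\<forall>w. (\<forall>i. w i \<in> S) \<longrightarrow> (w \<in> L \<longleftrightarrow> buchi_accepts Q I delta F w)))"

end

theory Submission
  imports Defs "HOL-Library.Infinite_Set"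
begin

text \<open>
  Fix an automaton with fewer than \<open>K\<close> states and the word \<open>w\<close> whose lead (prefix sum
  of the first component minus that of the second) climbs to \<open>K + 1\<close> and then oscillates
  between \<open>1\<close> and \<open>K + 1\<close> in descents and ascents of length \<open>K\<close>; it lies in the
  language. An accepting run repeats a state inside every descent of \<open>w\<close>, and by
  pigeonhole infinitely many blocks repeat the same state at the same offsets. This gives
  positions \<open>x < y\<close> with equal states, an accepting state in between, and a smaller lead
  at \<open>y\<close> than at \<open>x\<close>. The word \<open>w[0, x) w[x, y)\<^sup>\<omega>\<close> is then accepted too, but its
  lead decreases by a fixed amount per round, so it is not in the language.
\<close>

definition lead :: "(nat \<Rightarrow> nat \<times> nat) \<Rightarrow> nat \<Rightarrow> int" where
  "lead w n = (\<Sum>k<n. int (fst (w k)) - int (snd (w k)))"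

lemma lead_0 [simp]: "lead w 0 = 0"
  by (simp add: lead_def)

lemma lead_Suc: "lead w (Suc n) = lead w n + int (fst (w n)) - int (snd (w n))"
  by (simp add: lead_def)

lemma lead_eq_prefix_sum_diff:
  "lead w n = int (prefix_sum (fst \<circ> w) n) - int (prefix_sum (snd \<circ> w) n)"
  by (simp add: lead_def prefix_sum_def sum_subtractf)

lemma PLA_ge_iff_lead:
  "PLA_ge (fst \<circ> w) (snd \<circ> w) \<longleftrightarrow>
     finite {n. lead w n \<le> 0} \<and> infinite {n. 0 < lead w n}"
  by (simp add: PLA_ge_def lead_eq_prefix_sum_diff)

text \<open>\<open>w \<circ> lasso_index x y\<close> is the word \<open>w[0, x) w[x, y)\<^sup>\<omega>\<close>.\<close>

definition lasso_index :: "nat \<Rightarrow> nat \<Rightarrow> nat \<Rightarrow> nat" where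
  "lasso_index x y n = (if n < x then n else x + (n - x) mod (y - x))"

lemma lasso_index_Suc:
  assumes "x < y"
  shows "lasso_index x y (Suc n) =
           (if lasso_index x y n = y - 1 then x else Suc (lasso_index x y n))"
proof (cases "n < x")
  case True
  then show ?thesis using assms by (auto simp: lasso_index_def)
next
  case False
  then have "Suc n - x = Suc (n - x)" by simp
  with False assms show ?thesis
    by (auto simp: lasso_index_def mod_Suc)
qed

lemma lasso_index_period:
  "t < y - x \<Longrightarrow> lasso_index x y (x + m * (y - x) + t) = x + t"
  by (simp add: lasso_index_def)

lemma le_lasso_round_start:
  fixes x y m :: nat
  assumes "x < y"
  shows "m \<le> x + m * (y - x)"
proof -
  have "m * 1 \<le> m * (y - x)" using assms by (intro mult_le_mono2) simp
  then show ?thesis by (metis mult.right_neutral trans_le_add2)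
qed

lemma sum_lasso_index:
  fixes f :: "nat \<Rightarrow> 'a::comm_semiring_1"
  assumes "x < y"
  shows "(\<Sum>n<x + m * (y - x). f (lasso_index x y n)) =
           (\<Sum>n<x. f n) + of_nat m * (\<Sum>n\<in>{x..<y}. f n)"
proof (induction m)
  case 0
  then show ?case by (simp add: lasso_index_def)
next
  case (Suc m)
  let ?a = "x + m * (y - x)"
  have "x + Suc m * (y - x) = ?a + (y - x)" by simp
  then have "(\<Sum>n<x + Suc m * (y - x). f (lasso_index x y n)) =
          (\<Sum>n<?a. f (lasso_index x y n)) + (\<Sum>n\<in>{?a..<?a + (y - x)}. f (lasso_index x y n))"
    by (simp only: lessThan_atLeast0 sum.atLeastLessThan_concat le_add1 le0)
  also have "(\<Sum>n\<in>{?a..<?a + (y - x)}. f (lasso_index x y n)) = (\<Sum>t<y - x. f (x + t))"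
  proof (rule sum.reindex_bij_witness[of _ "\<lambda>t. ?a + t" "\<lambda>n. n - ?a"])
    fix n assume "n \<in> {?a..<?a + (y - x)}"
    then have "n - ?a < y - x" "?a + (n - ?a) = n" by auto
    then show "f (x + (n - ?a)) = f (lasso_index x y n)"
      using lasso_index_period[of "n - ?a" y x m] by metis
  qed auto
  also have "\<dots> = (\<Sum>n\<in>{x..<y}. f n)"
    by (rule sum.reindex_bij_witness[of _ "\<lambda>n. n - x" "\<lambda>t. x + t"]) auto
  finally show ?case using Suc by (simp add: algebra_simps)
qed

lemma lead_lasso:
  assumes "x < y"
  shows "lead (w \<circ> lasso_index x y) (x + m * (y - x)) = lead w x + int m * (lead w y - lead w x)"
proof -
  have "lead w y - lead w x = (\<Sum>k\<in>{x..<y}. int (fst (w k)) - int (snd (w k)))"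
    using assms by (simp add: lead_def lessThan_atLeast0 sum_diff_nat_ivl)
  then show ?thesis
    using sum_lasso_index[OF assms, of "\<lambda>k. int (fst (w k)) - int (snd (w k))" m]
    by (simp add: lead_def)
qed

lemma lasso_not_PLA_ge:
  assumes "x < y" and "lead w y < lead w x"
  shows "\<not> PLA_ge (fst \<circ> (w \<circ> lasso_index x y)) (snd \<circ> (w \<circ> lasso_index x y))"
proof -
  let ?v = "w \<circ> lasso_index x y"
  have "x + m * (y - x) \<in> {n. lead ?v n \<le> 0}" if "nat (lead w x) \<le> m" for m
  proof -
    have "int m * (lead w y - lead w x) \<le> int m * (- 1)"
      using assms(2) by (intro mult_left_mono) auto
    then show ?thesis using that lead_lasso[OF assms(1), of w m] by simp
  qed
  moreover have "m \<le> x + m * (y - x)" for m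
    using assms(1) by (rule le_lasso_round_start)
  ultimately have "infinite {n. lead ?v n \<le> 0}"
    unfolding infinite_nat_iff_unbounded_le
    by (metis le_add2 le_trans nat_le_linear)
  then show ?thesis by (simp add: PLA_ge_iff_lead)
qed

lemma buchi_accepts_lasso:
  assumes init: "r 0 \<in> I"
    and run: "\<forall>n. r n \<in> Q \<and> (r n, w n, r (Suc n)) \<in> delta"
    and loop: "r x = r y" and "x \<le> k" "k < y" and acc: "r k \<in> F"
  shows "buchi_accepts Q I delta F (w \<circ> lasso_index x y)"
proof -
  let ?g = "lasso_index x y"
  have xy: "x < y" using assms by simp
  have "(r \<circ> ?g) 0 \<in> I"
    using init by (cases x) (simp_all add: lasso_index_def)
  moreover have "r (?g (Suc n)) = r (Suc (?g n))" for n
    using loop xy by (simp add: lasso_index_Suc)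
  then have "\<forall>n. (r \<circ> ?g) n \<in> Q \<and> ((r \<circ> ?g) n, (w \<circ> ?g) n, (r \<circ> ?g) (Suc n)) \<in> delta"
    using run by simp
  moreover have "\<exists>\<^sub>\<infinity>n. (r \<circ> ?g) n \<in> F"
    unfolding INFM_nat
  proof
    fix m
    have "m < x + Suc m * (y - x) + (k - x)"
      using le_lasso_round_start[OF xy, of "Suc m"] by simp
    moreover have "(r \<circ> ?g) (x + Suc m * (y - x) + (k - x)) \<in> F"
      using lasso_index_period[of "k - x" y x "Suc m"] assms by simp
    ultimately show "\<exists>n>m. (r \<circ> ?g) n \<in> F" by blast
  qed
  ultimately show ?thesis
    unfolding buchi_accepts_def by blast
qed

lemma state_repeats_within_card:
  assumes "finite Q" and "\<forall>n. r n \<in> Q"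
  obtains t1 t2 where "t1 < t2" "t2 \<le> card Q" "r (i + t1) = r (i + t2)"
proof -
  have "(\<lambda>t. r (i + t)) ` {0..card Q} \<subseteq> Q" using assms(2) by auto
  then have "card ((\<lambda>t. r (i + t)) ` {0..card Q}) \<le> card Q"
    by (rule card_mono[OF assms(1)])
  then have "card ((\<lambda>t. r (i + t)) ` {0..card Q}) < card {0..card Q}" by simp
  then have "\<not> inj_on (\<lambda>t. r (i + t)) {0..card Q}" by (rule pigeonhole)
  then obtain s1 s2 where "s1 \<le> card Q" "s2 \<le> card Q" "s1 \<noteq> s2" "r (i + s1) = r (i + s2)"
    unfolding inj_on_def by auto
  then show thesis
    using that by (metis linorder_neqE_nat)
qed

definition zigzag :: "nat \<Rightarrow> nat \<Rightarrow> nat \<times> nat" where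
  "zigzag K n = (if K < n \<and> (n - Suc K) mod (2 * K) < K then (0, 1) else (1, 0))"

lemma lead_zigzag_initial: "n \<le> Suc K \<Longrightarrow> lead (zigzag K) n = int n"
  by (induction n) (auto simp: lead_Suc zigzag_def)

lemma lead_zigzag_within_block:
  assumes "t \<le> 2 * K"
  shows "lead (zigzag K) (Suc K + 2 * K * m + t) =
           lead (zigzag K) (Suc K + 2 * K * m) - int (min t (2 * K - t))"
  using assms
proof (induction t)
  case (Suc t)
  have "(2 * K * m + t) mod (2 * K) = t" using Suc.prems by simp
  then have "zigzag K (Suc K + 2 * K * m + t) = (if t < K then (0, 1) else (1, 0))"
    by (simp add: zigzag_def)
  with Suc show ?case by (simp add: lead_Suc)
qed simp

lemma lead_zigzag_block_start: "lead (zigzag K) (Suc K + 2 * K * m) = int K + 1"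
proof (induction m)
  case 0
  then show ?case by (simp add: lead_zigzag_initial)
next
  case (Suc m)
  have "Suc K + 2 * K * Suc m = Suc K + 2 * K * m + 2 * K" by simp
  then show ?case using lead_zigzag_within_block[of "2 * K" K m] Suc by simp
qed

lemma lead_zigzag_block:
  "t \<le> 2 * K \<Longrightarrow> lead (zigzag K) (Suc K + 2 * K * m + t) = int K + 1 - int (min t (2 * K - t))"
  using lead_zigzag_within_block[of t K m] lead_zigzag_block_start[of K m] by simp

lemma lead_zigzag_descending:
  "t \<le> K \<Longrightarrow> lead (zigzag K) (Suc K + 2 * K * m + t) = int K + 1 - int t"
  using lead_zigzag_block[of t K m] by simp

lemma lead_zigzag_pos:
  assumes "0 < K" and "1 \<le> n"
  shows "1 \<le> lead (zigzag K) n"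
proof (cases "n \<le> Suc K")
  case True
  then show ?thesis using assms by (simp add: lead_zigzag_initial)
next
  case False
  define m where "m = (n - Suc K) div (2 * K)"
  define t where "t = (n - Suc K) mod (2 * K)"
  have "n = Suc K + 2 * K * m + t" using False by (simp add: m_def t_def)
  moreover have "t < 2 * K" using assms(1) by (simp add: t_def)
  ultimately show ?thesis using lead_zigzag_block[of t K m] by simp
qed

lemma zigzag_in_PLA_comparator:
  assumes "0 < K" and "1 \<le> mu"
  shows "zigzag K \<in> PLA_comparator mu"
proof -
  have "{n. lead (zigzag K) n \<le> 0} \<subseteq> {0}"
    using lead_zigzag_pos[OF assms(1)] by (force simp: Suc_le_eq)
  then have "finite {n. lead (zigzag K) n \<le> 0}" by (rule finite_subset) simp
  moreover have "{1..} \<subseteq> {n. 0 < lead (zigzag K) n}" using lead_zigzag_pos[OF assms(1)] by force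
  then have "infinite {n. 0 < lead (zigzag K) n}" using infinite_Ici finite_subset by blast
  ultimately show ?thesis
    using assms by (auto simp: PLA_comparator_def PLA_ge_iff_lead alph_def zigzag_def)
qed

lemma zigzag_run_descending_loop:
  assumes "finite Q" and "card Q < K" and states: "\<forall>n. r n \<in> Q" and acc: "\<exists>\<^sub>\<infinity>n. r n \<in> F"
  obtains x k y where "x \<le> k" "k < y" "r k \<in> F" "r x = r y"
    "lead (zigzag K) y < lead (zigzag K) x"
proof -
  define p where "p m = Suc K + 2 * K * m" for m
  have "\<forall>m. \<exists>t1 t2. t1 < t2 \<and> t2 \<le> card Q \<and> r (p m + t1) = r (p m + t2)"
    using state_repeats_within_card[OF assms(1) states] by metis
  then obtain t1 t2 where t: "\<And>m. t1 m < t2 m" "\<And>m. t2 m \<le> card Q"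
    "\<And>m. r (p m + t1 m) = r (p m + t2 m)"
    by metis
  have t1_le: "t1 m \<le> card Q" for m using t(1,2)[of m] by simp
  define c where "c m = (t1 m, t2 m, r (p m + t1 m))" for m
  have "range c \<subseteq> {..card Q} \<times> {..card Q} \<times> Q"
    using t(2) t1_le states by (auto simp: c_def)
  then have "finite (range c)" using assms(1) finite_subset by blast
  then obtain col where "infinite (c -` {col})"
    using inf_img_fin_domE infinite_UNIV_nat by blast
  then have unb: "\<exists>m>n. c m = col" for n
    by (simp add: infinite_nat_iff_unbounded)
  then obtain m1 where m1: "c m1 = col" by blast
  obtain k where k: "p m1 + t1 m1 \<le> k" "r k \<in> F"
    using acc by (auto simp: INFM_nat_le)
  obtain m2 where m2: "c m2 = col" "k < m2" using unb by blast
  have "c m1 = c m2" using m1 m2 by simp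
  then have same: "t1 m1 = t1 m2" "r (p m1 + t1 m1) = r (p m2 + t1 m2)"
    unfolding c_def by auto
  have "m2 * 1 \<le> m2 * (2 * K)" using assms(2) by (intro mult_le_mono2) simp
  then have "m2 \<le> p m2" unfolding p_def by (metis le_SucI mult.commute mult_1_right trans_le_add2)
  show thesis
  proof (rule that)
    show "p m1 + t1 m1 \<le> k" "r k \<in> F" by (fact k)+
    show "k < p m2 + t2 m2" using \<open>m2 \<le> p m2\<close> m2 by simp
    show "r (p m1 + t1 m1) = r (p m2 + t2 m2)" using same t(3) by simp
    have "t2 m2 \<le> K" "t1 m1 \<le> K" using t(2)[of m2] t1_le[of m1] assms(2) by simp_all
    then show "lead (zigzag K) (p m2 + t2 m2) < lead (zigzag K) (p m1 + t1 m1)"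
      using lead_zigzag_descending[of "t2 m2" K m2] lead_zigzag_descending[of "t1 m1" K m1]
        t(1)[of m2] same(1) by (simp add: p_def)
  qed
qed

theorem theorem19:
  fixes mu :: nat
  assumes "mu \<ge> 1"
  shows "\<not> omega_regular (alph mu) (PLA_comparator mu)"
proof
  assume "omega_regular (alph mu) (PLA_comparator mu)"
  then obtain Q I delta F where "finite Q" and
    recog: "\<And>w. \<forall>i. w i \<in> alph mu \<Longrightarrow> w \<in> PLA_comparator mu \<longleftrightarrow> buchi_accepts Q I delta F w"
    unfolding omega_regular_def by blast
  let ?w = "zigzag (Suc (card Q))"
  have alph: "\<forall>i. (?w \<circ> g) i \<in> alph mu" for g :: "nat \<Rightarrow> nat"
    using assms by (simp add: alph_def zigzag_def)
  have "buchi_accepts Q I delta F ?w"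
    using recog[OF alph[of id]] zigzag_in_PLA_comparator[OF zero_less_Suc assms] by simp
  then obtain r where "r 0 \<in> I" and run: "\<forall>i. r i \<in> Q \<and> (r i, ?w i, r (Suc i)) \<in> delta"
    and "\<exists>\<^sub>\<infinity>i. r i \<in> F"
    unfolding buchi_accepts_def by blast
  then obtain x k y where "x \<le> k" "k < y" "r k \<in> F" "r x = r y" and desc: "lead ?w y < lead ?w x"
    using zigzag_run_descending_loop[OF \<open>finite Q\<close> lessI, of r F] run by blast
  then have "buchi_accepts Q I delta F (?w \<circ> lasso_index x y)"
    using buchi_accepts_lasso[OF \<open>r 0 \<in> I\<close> run] by blast
  then have "?w \<circ> lasso_index x y \<in> PLA_comparator mu" using recog[OF alph] by blast
  moreover have "x < y" using \<open>x \<le> k\<close> \<open>k < y\<close> by simp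
  ultimately show False
    using lasso_not_PLA_ge[OF _ desc] by (simp add: PLA_comparator_def)
qed

end
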